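(* For each $n\ge p$ let $\mathbf Y=\mathbf X\boldsymbol\beta^0+\boldsymbol\epsilon$ with $\boldsymbol\epsilon\sim N_n(\mathbf 0,\sigma^2\mathbf I_n)$, $\sigma>0$ fixed, where the $n\times p$ design $\mathbf X=\mathbf X^{(n)}$ satisfies $\mathbf X^T\mathbf X=n\mathbf I_p$, and the coefficient vector $\boldsymbol\beta^0=(\boldsymbol\beta_1^{0},\dots,\boldsymbol\beta_G^{0})$ (blocks of fixed sizes $m_g$, $p=\sum_g m_g$) does not depend on $n$. Assume at least one group has $\boldsymbol\beta_g^0=\mathbf 0$. Let $\hat{\boldsymbol\beta}^{LS}=\mathbf X^T\mathbf Y/n$ and define the group lasso estimator blockwise by $\hat{\boldsymbol\beta}^{GL}_g=\big(1-\frac{\lambda_n}{n\|\hat{\boldsymbol\beta}^{LS}_g\|_2}\big)_+\hat{\boldsymbol\beta}^{LS}_g$. If $\lambda_n/\sqrt n\to\lambda_0$ for some $\lambda_0\in[0,\infty)$, then $\limsup_{n\to\infty}P(\mathcal A_n^{GL}=\mathcal A)<1$. *)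

theory Defs
  imports "HOL-Probability.Probability"
begin

definition block :: "(nat \<Rightarrow> nat) \<Rightarrow> nat \<Rightarrow> nat set" where
  "block m g = {(\<Sum>h<g. m h)..<(\<Sum>h<Suc g. m h)}"

definition block_norm :: "(nat \<Rightarrow> nat) \<Rightarrow> (nat \<Rightarrow> real) \<Rightarrow> nat \<Rightarrow> real" where
  "block_norm m b g = sqrt (\<Sum>j\<in>block m g. (b j)^2)"

definition ls_est :: "(nat \<Rightarrow> nat \<Rightarrow> real) \<Rightarrow> nat \<Rightarrow> (nat \<Rightarrow> real) \<Rightarrow> nat \<Rightarrow> real" where
  "ls_est Xn n Y j = (\<Sum>i<n. Xn i j * Y i) / real n"

definition gl_block :: "(nat \<Rightarrow> nat) \<Rightarrow> real \<Rightarrow> nat \<Rightarrow> (nat \<Rightarrow> real) \<Rightarrow> nat \<Rightarrow> nat \<Rightarrow> real" where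
  "gl_block m lam n b g j =
     (if j \<in> block m g then max 0 (1 - lam / (real n * block_norm m b g)) * b j else 0)"

definition gl_active :: "nat \<Rightarrow> (nat \<Rightarrow> nat) \<Rightarrow> real \<Rightarrow> nat \<Rightarrow> (nat \<Rightarrow> real) \<Rightarrow> nat set" where
  "gl_active G m lam n b = {g. g < G \<and> gl_block m lam n b g \<noteq> (\<lambda>_. 0)}"

definition true_active :: "nat \<Rightarrow> (nat \<Rightarrow> nat) \<Rightarrow> (nat \<Rightarrow> real) \<Rightarrow> nat set" where
  "true_active G m \<beta> = {g. g < G \<and> (\<exists>j\<in>block m g. \<beta> j \<noteq> 0)}"

definition noise_space :: "nat \<Rightarrow> real \<Rightarrow> (nat \<Rightarrow> real) measure" where
  "noise_space n \<sigma> = PiM {..<n} (\<lambda>_. density lborel (normal_density 0 \<sigma>))"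

end

theory Submission
  imports Defs
begin

text \<open>
  The group lasso discards group g exactly when the least squares block has norm at most
  \<open>\<lambda>\<^sub>n / n\<close>. For a null group g and a coordinate j of it, orthogonality of the design gives
  \<open>\<beta>\<^sup>L\<^sup>S\<^sub>j = (X\<^sup>T\<epsilon>)\<^sub>j / n\<close>, where \<open>(X\<^sup>T\<epsilon>)\<^sub>j\<close> is centred normal with standard deviation \<open>\<sigma>\<surd>n\<close>. So discarding g,
  which correct selection requires, forces a standard normal variable into
  \<open>[-\<lambda>\<^sub>n/(\<sigma>\<surd>n), \<lambda>\<^sub>n/(\<sigma>\<surd>n)]\<close>, an interval that is eventually contained in a fixed bounded one,
  whose probability is strictly less than 1.
\<close>

abbreviation std_normal_measure :: "real measure" where
  "std_normal_measure \<equiv> density lborel std_normal_density"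

lemma prob_space_noise_space: "\<sigma> > 0 \<Longrightarrow> prob_space (noise_space n \<sigma>)"
  unfolding noise_space_def by (intro prob_space_PiM prob_space_normal_density)

lemma product_prob_space_normal_density:
  "\<sigma> > 0 \<Longrightarrow> product_prob_space (\<lambda>_::nat. density lborel (normal_density \<mu> \<sigma>))"
  using prob_space_normal_density[of \<sigma> \<mu>]
  by (simp add: product_prob_space_def product_sigma_finite_def
      prob_space_imp_sigma_finite product_prob_space_axioms_def)

lemma distr_noise_space_component:
  assumes "i < n" "\<sigma> > 0"
  shows "distr (noise_space n \<sigma>) borel (\<lambda>\<epsilon>. \<epsilon> i) = density lborel (normal_density 0 \<sigma>)"
proof -
  interpret product_prob_space "\<lambda>_. density lborel (normal_density 0 \<sigma>)" "{..<n}"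
    using product_prob_space_normal_density assms by blast
  have "distr (noise_space n \<sigma>) borel (\<lambda>\<epsilon>. \<epsilon> i)
      = distr (noise_space n \<sigma>) (density lborel (normal_density 0 \<sigma>)) (\<lambda>\<epsilon>. \<epsilon> i)"
    by (rule distr_cong) auto
  also have "\<dots> = density lborel (normal_density 0 \<sigma>)"
    unfolding noise_space_def using PiM_component[of i] assms by simp
  finally show ?thesis .
qed

lemma distributed_noise_space_component:
  assumes "i < n" "\<sigma> > 0"
  shows "distributed (noise_space n \<sigma>) lborel (\<lambda>\<epsilon>. \<epsilon> i) (normal_density 0 \<sigma>)"
proof -
  have "distr (noise_space n \<sigma>) lborel (\<lambda>\<epsilon>. \<epsilon> i) = distr (noise_space n \<sigma>) borel (\<lambda>\<epsilon>. \<epsilon> i)"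
    by (rule distr_cong) auto
  then show ?thesis
    using distr_noise_space_component[OF assms] assms
    by (auto simp: distributed_def noise_space_def intro!: measurable_component_singleton)
qed

lemma indep_vars_noise_space_components:
  assumes "\<sigma> > 0" "n > 0"
  shows "prob_space.indep_vars (noise_space n \<sigma>) (\<lambda>_. borel) (\<lambda>i \<epsilon>. \<epsilon> i) {..<n}"
proof -
  interpret prob_space "noise_space n \<sigma>"
    using prob_space_noise_space assms by blast
  have "distr (noise_space n \<sigma>) (\<Pi>\<^sub>M i\<in>{..<n}. borel) (\<lambda>\<epsilon>. \<lambda>i\<in>{..<n}. \<epsilon> i)
      = distr (noise_space n \<sigma>) (noise_space n \<sigma>) (\<lambda>\<epsilon>. \<epsilon>)"
    by (rule distr_cong)
      (auto simp: noise_space_def space_PiM PiE_def extensional_restrict intro!: sets_PiM_cong)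
  also have "\<dots> = (\<Pi>\<^sub>M i\<in>{..<n}. distr (noise_space n \<sigma>) borel (\<lambda>\<epsilon>. \<epsilon> i))"
  proof -
    have "(\<Pi>\<^sub>M i\<in>{..<n}. distr (noise_space n \<sigma>) borel (\<lambda>\<epsilon>. \<epsilon> i))
        = (\<Pi>\<^sub>M i\<in>{..<n}. density lborel (normal_density 0 \<sigma>))"
      by (rule PiM_cong) (simp_all add: distr_noise_space_component assms)
    then show ?thesis by (simp add: noise_space_def)
  qed
  finally show ?thesis
    using \<open>n > 0\<close> by (subst indep_vars_iff_distr_eq_PiM')
      (auto simp: noise_space_def intro!: measurable_component_singleton)
qed

lemma distributed_noise_space_linear_combination:
  assumes "\<sigma> > 0" and "(\<Sum>i<n. (a i)\<^sup>2) > 0"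
  shows "distributed (noise_space n \<sigma>) lborel (\<lambda>\<epsilon>. \<Sum>i<n. a i * \<epsilon> i)
           (normal_density 0 (\<sigma> * sqrt (\<Sum>i<n. (a i)\<^sup>2)))"
proof -
  interpret prob_space "noise_space n \<sigma>"
    using prob_space_noise_space assms by blast
  \<comment> \<open>\<open>sum_indep_normal\<close> needs nondegenerate summands, so the zero coefficients are dropped first.\<close>
  define I where "I = {i. i < n \<and> a i \<noteq> 0}"
  have sum_over_I: "(\<Sum>i\<in>I. f i) = (\<Sum>i<n. f i)" if "\<And>i. a i = 0 \<Longrightarrow> f i = 0" for f :: "nat \<Rightarrow> real"
    by (rule sum.mono_neutral_left) (auto simp: I_def that)
  have "I \<noteq> {}"
    using assms(2) sum_over_I[of "\<lambda>i. (a i)\<^sup>2"] by auto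
  then have "n > 0"
    by (auto simp: I_def)
  have "indep_vars (\<lambda>_. borel) (\<lambda>i \<epsilon>. a i * \<epsilon> i) I"
    by (rule indep_vars_compose2[OF indep_vars_subset[OF indep_vars_noise_space_components]])
      (use assms \<open>n > 0\<close> in \<open>auto simp: I_def\<close>)
  moreover have "distributed (noise_space n \<sigma>) lborel (\<lambda>\<epsilon>. a i * \<epsilon> i) (normal_density 0 (\<bar>a i\<bar> * \<sigma>))"
    if "i \<in> I" for i
    using normal_density_affine[OF distributed_noise_space_component[of i n \<sigma>], of "a i" 0] that assms
    by (simp add: I_def)
  ultimately have "distributed (noise_space n \<sigma>) lborel (\<lambda>\<epsilon>. \<Sum>i\<in>I. a i * \<epsilon> i)
      (normal_density (\<Sum>i\<in>I. 0) (sqrt (\<Sum>i\<in>I. (\<bar>a i\<bar> * \<sigma>)\<^sup>2)))"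
    by (intro sum_indep_normal) (use \<open>I \<noteq> {}\<close> assms in \<open>auto simp: I_def\<close>)
  moreover have "(\<Sum>i\<in>I. (\<bar>a i\<bar> * \<sigma>)\<^sup>2) = \<sigma>\<^sup>2 * (\<Sum>i<n. (a i)\<^sup>2)"
    using sum_over_I[of "\<lambda>i. (\<bar>a i\<bar> * \<sigma>)\<^sup>2"]
    by (simp add: power_mult_distrib sum_distrib_left mult.commute)
  ultimately show ?thesis
    using assms(1) sum_over_I[of "\<lambda>i. a i * _ i"] by (simp add: real_sqrt_mult)
qed

lemma emeasure_std_normal_greaterThan_pos: "emeasure std_normal_measure {C<..} > 0"
proof (rule ccontr)
  assume "\<not> ?thesis"
  then have "(\<integral>\<^sup>+x. ennreal (std_normal_density x) * indicator {C<..} x \<partial>lborel) = 0"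
    by (simp add: emeasure_density)
  then have "AE x in lborel. ennreal (std_normal_density x) * indicator {C<..} x = 0"
    by (subst (asm) nn_integral_0_iff_AE) auto
  then have "AE x in lborel. x \<notin> {C<..C+1}"
  proof eventually_elim
    case (elim x)
    then show ?case
      using normal_density_pos[of 1 0 x] by (auto simp: indicator_def ennreal_eq_0_iff)
  qed
  then have "emeasure lborel {C<..C+1} = 0"
    by (subst (asm) AE_iff_measurable[where N="{C<..C+1}"]) auto
  then show False by simp
qed

lemma measure_std_normal_interval_less_1: "measure std_normal_measure {-C..C} < 1"
proof -
  interpret prob_space std_normal_measure
    by (rule prob_space_normal_density) simp
  have "measure std_normal_measure {C<..} > 0"
    using emeasure_std_normal_greaterThan_pos[of C] by (simp add: emeasure_eq_measure)
  moreover have "measure std_normal_measure ({-C..C} \<union> {C<..})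
      = measure std_normal_measure {-C..C} + measure std_normal_measure {C<..}"
    by (rule finite_measure_Union) auto
  moreover have "measure std_normal_measure ({-C..C} \<union> {C<..}) \<le> 1"
    by (rule prob_le_1)
  ultimately show ?thesis by linarith
qed

lemma measure_noise_space_abs_linear_combination_le_eq:
  assumes "\<sigma> > 0" and "(\<Sum>i<n. (a i)\<^sup>2) > 0"
  defines "s \<equiv> \<sigma> * sqrt (\<Sum>i<n. (a i)\<^sup>2)"
  shows "measure (noise_space n \<sigma>) {\<epsilon> \<in> space (noise_space n \<sigma>). \<bar>\<Sum>i<n. a i * \<epsilon> i\<bar> \<le> t}
       = measure std_normal_measure {-(t / s)..t / s}"
proof -
  interpret prob_space "noise_space n \<sigma>"
    using prob_space_noise_space assms by blast
  define S where "S \<epsilon> = (\<Sum>i<n. a i * \<epsilon> i)" for \<epsilon> :: "nat \<Rightarrow> real"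
  have "s > 0" using assms by (simp add: s_def)
  then have Z: "distributed (noise_space n \<sigma>) lborel (\<lambda>\<epsilon>. S \<epsilon> / s) std_normal_density"
    using distributed_noise_space_linear_combination[OF assms(1,2)]
      normal_standard_normal_convert[of s _ 0]
    by (simp add: S_def s_def)
  then have "(\<lambda>\<epsilon>. S \<epsilon> / s) \<in> borel_measurable (noise_space n \<sigma>)"
    by (auto simp: distributed_def)
  then have "measure (noise_space n \<sigma>) {\<epsilon> \<in> space (noise_space n \<sigma>). \<bar>S \<epsilon>\<bar> \<le> t}
      = measure (distr (noise_space n \<sigma>) lborel (\<lambda>\<epsilon>. S \<epsilon> / s)) {-(t / s)..t / s}"
    using \<open>s > 0\<close>
    by (subst measure_distr) (auto simp: abs_le_iff field_simps intro!: arg_cong[where f=prob])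
  also have "\<dots> = measure std_normal_measure {-(t / s)..t / s}"
    using Z by (simp add: distributed_def)
  finally show ?thesis by (simp add: S_def)
qed

lemma sum_lessThan_mem_block: "m g > 0 \<Longrightarrow> (\<Sum>h<g. m h) \<in> block m g"
  by (simp add: block_def)

lemma block_subset_lessThan: "g < G \<Longrightarrow> block m g \<subseteq> {..<\<Sum>h<G. m h}"
  unfolding block_def using sum_mono2[of "{..<G}" "{..<Suc g}" m] by auto

lemma abs_le_of_gl_block_eq_zero:
  assumes "gl_block m lam n b g = (\<lambda>_. 0)" "j \<in> block m g" "n > 0" "lam \<ge> 0"
  shows "\<bar>b j\<bar> \<le> lam / real n"
proof (cases "b j = 0")
  case True
  then show ?thesis using assms by simp
next
  case False
  let ?N = "block_norm m b g"
  have "(b j)\<^sup>2 \<le> (\<Sum>i\<in>block m g. (b i)\<^sup>2)"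
    by (rule member_le_sum) (use assms in \<open>auto simp: block_def\<close>)
  then have "\<bar>b j\<bar> \<le> ?N"
    unfolding block_norm_def using real_sqrt_le_mono by fastforce
  moreover have "max 0 (1 - lam / (real n * ?N)) = 0"
    using fun_cong[OF assms(1), of j] False assms(2) by (simp add: gl_block_def)
  ultimately have "?N > 0" "1 \<le> lam / (real n * ?N)"
    using False max.cobounded2[of 0 "1 - lam / (real n * ?N)"] by linarith+
  then have "real n * ?N \<le> lam"
    using assms(3) by (simp add: le_divide_eq)
  then have "?N \<le> lam / real n"
    using assms(3) by (simp add: pos_le_divide_eq mult.commute)
  then show ?thesis
    using \<open>\<bar>b j\<bar> \<le> ?N\<close> by linarith
qed

lemma ls_est_orthonormal_design:
  assumes orth: "\<forall>j<p. \<forall>k<p. (\<Sum>i<n. Xn i j * Xn i k) = (if j = k then real n else 0)"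
    and "k < p" "n > 0"
  shows "ls_est Xn n (\<lambda>i. (\<Sum>j<p. Xn i j * \<beta> j) + \<epsilon> i) k = \<beta> k + (\<Sum>i<n. Xn i k * \<epsilon> i) / real n"
proof -
  have "(\<Sum>i<n. Xn i k * (\<Sum>j<p. Xn i j * \<beta> j)) = (\<Sum>j<p. \<beta> j * (\<Sum>i<n. Xn i k * Xn i j))"
    by (simp add: sum_distrib_left sum_distrib_right mult_ac sum.swap[of _ "{..<n}"])
  also have "\<dots> = (\<Sum>j<p. \<beta> j * (if k = j then real n else 0))"
    using orth \<open>k < p\<close> by simp
  also have "\<dots> = \<beta> k * real n"
    using \<open>k < p\<close> by (simp add: if_distrib cong: if_cong)
  finally show ?thesis
    using \<open>n > 0\<close> by (simp add: ls_est_def distrib_left sum.distrib add_divide_distrib)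
qed

lemma gl_inactive_null_group_imp_abs_le:
  assumes orth: "\<forall>j<p. \<forall>k<p. (\<Sum>i<n. Xn i j * Xn i k) = (if j = k then real n else 0)"
    and "g < G" "g \<notin> gl_active G m lam n (ls_est Xn n (\<lambda>i. (\<Sum>j<p. Xn i j * \<beta> j) + \<epsilon> i))"
    and "k \<in> block m g" "k < p" "\<beta> k = 0" "n > 0" "lam \<ge> 0"
  shows "\<bar>\<Sum>i<n. Xn i k * \<epsilon> i\<bar> \<le> lam"
proof -
  have "\<bar>ls_est Xn n (\<lambda>i. (\<Sum>j<p. Xn i j * \<beta> j) + \<epsilon> i) k\<bar> \<le> lam / real n"
    using assms by (intro abs_le_of_gl_block_eq_zero[where g=g]) (auto simp: gl_active_def)
  then show ?thesis
    using assms by (simp add: ls_est_orthonormal_design abs_divide divide_le_cancel)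
qed

lemma measure_gl_active_eq_true_active_le:
  assumes orth: "\<forall>j<p. \<forall>k<p. (\<Sum>i<n. Xn i j * Xn i k) = (if j = k then real n else 0)"
    and "\<sigma> > 0" "n > 0" "lam \<ge> 0"
    and null_group: "g < G" "\<forall>j\<in>block m g. \<beta> j = 0"
    and "k \<in> block m g" "k < p"
  shows "measure (noise_space n \<sigma>)
           {\<epsilon> \<in> space (noise_space n \<sigma>).
              gl_active G m lam n (ls_est Xn n (\<lambda>i. (\<Sum>j<p. Xn i j * \<beta> j) + \<epsilon> i))
              = true_active G m \<beta>}
         \<le> measure std_normal_measure {-(lam / (\<sigma> * sqrt n))..lam / (\<sigma> * sqrt n)}"
proof -
  interpret prob_space "noise_space n \<sigma>"
    using prob_space_noise_space assms by blast
  have "g \<notin> true_active G m \<beta>"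
    using null_group by (auto simp: true_active_def)
  then have "{\<epsilon> \<in> space (noise_space n \<sigma>).
              gl_active G m lam n (ls_est Xn n (\<lambda>i. (\<Sum>j<p. Xn i j * \<beta> j) + \<epsilon> i))
              = true_active G m \<beta>}
      \<subseteq> {\<epsilon> \<in> space (noise_space n \<sigma>). \<bar>\<Sum>i<n. Xn i k * \<epsilon> i\<bar> \<le> lam}"
    using gl_inactive_null_group_imp_abs_le[where g=g] assms by auto
  moreover have "{\<epsilon> \<in> space (noise_space n \<sigma>). \<bar>\<Sum>i<n. Xn i k * \<epsilon> i\<bar> \<le> lam} \<in> events"
    unfolding noise_space_def by measurable
  ultimately have "prob {\<epsilon> \<in> space (noise_space n \<sigma>).
              gl_active G m lam n (ls_est Xn n (\<lambda>i. (\<Sum>j<p. Xn i j * \<beta> j) + \<epsilon> i))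
              = true_active G m \<beta>}
      \<le> prob {\<epsilon> \<in> space (noise_space n \<sigma>). \<bar>\<Sum>i<n. Xn i k * \<epsilon> i\<bar> \<le> lam}"
    by (rule finite_measure_mono)
  also have "\<dots> = measure std_normal_measure {-(lam / (\<sigma> * sqrt n))..lam / (\<sigma> * sqrt n)}"
    using measure_noise_space_abs_linear_combination_le_eq[where a="\<lambda>i. Xn i k" and t=lam]
      orth assms by (simp add: power2_eq_square)
  finally show ?thesis .
qed

theorem mainTheorem3:
  fixes G p :: nat and m :: "nat \<Rightarrow> nat" and X :: "nat \<Rightarrow> nat \<Rightarrow> nat \<Rightarrow> real"
    and \<beta>0 :: "nat \<Rightarrow> real" and \<sigma> lam0 :: real and lam :: "nat \<Rightarrow> real"
  assumes "\<forall>g<G. m g > 0"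
    and "p = (\<Sum>g<G. m g)"
    and "\<sigma> > 0"
    and "\<forall>n\<ge>p. \<forall>j<p. \<forall>k<p. (\<Sum>i<n. X n i j * X n i k) = (if j = k then real n else 0)"
    and "\<exists>g<G. \<forall>j\<in>block m g. \<beta>0 j = 0"
    and "\<forall>n. lam n \<ge> 0"
    and "(\<lambda>n. lam n / sqrt (real n)) \<longlonglongrightarrow> lam0"
    and "lam0 \<ge> 0"
  shows "limsup (\<lambda>n. ereal (measure (noise_space n \<sigma>)
           {\<epsilon> \<in> space (noise_space n \<sigma>).
              gl_active G m (lam n) n
                (ls_est (X n) n (\<lambda>i. (\<Sum>j<p. X n i j * \<beta>0 j) + \<epsilon> i))
              = true_active G m \<beta>0})) < 1"
proof -
  let ?P = "\<lambda>n. measure (noise_space n \<sigma>)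
           {\<epsilon> \<in> space (noise_space n \<sigma>).
              gl_active G m (lam n) n (ls_est (X n) n (\<lambda>i. (\<Sum>j<p. X n i j * \<beta>0 j) + \<epsilon> i))
              = true_active G m \<beta>0}"
  interpret std_normal: prob_space std_normal_measure
    by (rule prob_space_normal_density) simp
  obtain g where g: "g < G" "\<forall>j\<in>block m g. \<beta>0 j = 0"
    using assms(5) by blast
  define k where "k = (\<Sum>h<g. m h)"
  have k: "k \<in> block m g" "k < p"
    using sum_lessThan_mem_block[of m g] block_subset_lessThan[of g G m] assms(1,2) g
    by (auto simp: k_def)
  define C where "C = (lam0 + 1) / \<sigma>"
  have "eventually (\<lambda>n. lam n / sqrt n < lam0 + 1 \<and> n \<ge> max p 1) sequentially"
    using eventually_conj[OF order_tendstoD(2)[OF assms(7), of "lam0 + 1"]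
        eventually_ge_at_top[of "max p 1"]] by simp
  then have "eventually (\<lambda>n. ereal (?P n) \<le> measure std_normal_measure {-C..C}) sequentially"
  proof eventually_elim
    case (elim n)
    then have "n > 0" and orth: "\<forall>j<p. \<forall>k<p. (\<Sum>i<n. X n i j * X n i k) = (if j = k then real n else 0)"
      using assms(4) by auto
    have "lam n / (\<sigma> * sqrt n) = (lam n / sqrt n) / \<sigma>"
      by (simp add: mult.commute)
    also have "\<dots> \<le> C"
      unfolding C_def using elim assms(3) by (intro divide_right_mono) auto
    finally have "measure std_normal_measure {-(lam n / (\<sigma> * sqrt n))..lam n / (\<sigma> * sqrt n)}
        \<le> measure std_normal_measure {-C..C}"
      by (intro std_normal.finite_measure_mono) auto
    then show ?case
      using measure_gl_active_eq_true_active_le[OF orth assms(3) \<open>n > 0\<close> assms(6)[rule_format, of n] g k]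
      by simp
  qed
  then have "limsup (\<lambda>n. ereal (?P n)) \<le> measure std_normal_measure {-C..C}"
    by (rule Limsup_bounded)
  then show ?thesis
    using measure_std_normal_interval_less_1[of C] by (simp add: le_less_trans)
qed

end
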